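(* In the parallel-links routing game with homogeneous costs described in the context, there exists a link $M\in\mathcal L$ such that (i) $T_l(\hat f_l)\ge T_l(f^*_l)$ for all $l\le M$, and (ii) $T_n(\hat f_n)\le T_n(f^*_n)$ for all $n>M$.
   Context: Parallel-links routing game: users $\mathcal N=\{1,\dots,N\}$ share parallel links $\mathcal L=\{1,\dots,L\}$ from a common source to a common destination; link $l$ has capacity $c_l$, links indexed so that $c_1\ge c_2\ge\dots\ge c_L$. User $i$ has demand $r^i>0$, $R=\sum_ir^i<\sum_lc_l$. A routing strategy of user $i$ is $\mathbf f^i=(f^i_l)_l$ with $f^i_l\ge0$, $\sum_lf^i_l=r^i$; $f_l=\sum_if^i_l$. Homogeneous costs: $J^i(\mathbf f)=\sum_lf^i_lT_l(f_l)$, each $T_l:[0,\infty)\to[0,\infty)$ strictly increasing, convex, continuously differentiable, with $T_l(f_l)=T(c_l-f_l)$ for $f_l<c_l$ and $T_l(f_l)=\infty$ for $f_l\ge c_l$, for a single link-independent function $T$ with $T(c_l-f_l)$ strictly increasing in $f_l$. $(\hat f_l)_l$ are the link totals of the unique Nash equilibrium (feasible profile where each user's strategy minimizes its own cost given the others'). $(f^*_l)_l$ are the link totals minimizing the social cost $\sum_lf_lT_l(f_l)$ over feasible profiles. *)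

theory Defs
  imports "HOL-Analysis.Analysis" "HOL-Library.Extended_Real"
begin

text \<open>Users are indexed by 1..N, links by 1..L.
A profile is f :: nat => nat => real, with f i l the flow of user i on link l.\<close>

definition link_cost :: "(real \<Rightarrow> real) \<Rightarrow> (nat \<Rightarrow> real) \<Rightarrow> nat \<Rightarrow> real \<Rightarrow> ereal" where
  "link_cost T c l x = (if x < c l then ereal (T (c l - x)) else \<infinity>)"

definition is_strategy :: "nat \<Rightarrow> (nat \<Rightarrow> real) \<Rightarrow> nat \<Rightarrow> (nat \<Rightarrow> real) \<Rightarrow> bool" where
  "is_strategy L r i g \<longleftrightarrow> (\<forall>l\<in>{1..L}. 0 \<le> g l) \<and> (\<Sum>l=1..L. g l) = r i"

definition feasible :: "nat \<Rightarrow> nat \<Rightarrow> (nat \<Rightarrow> real) \<Rightarrow> (nat \<Rightarrow> nat \<Rightarrow> real) \<Rightarrow> bool" where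
  "feasible N L r f \<longleftrightarrow> (\<forall>i\<in>{1..N}. is_strategy L r i (f i))"

definition link_total :: "nat \<Rightarrow> (nat \<Rightarrow> nat \<Rightarrow> real) \<Rightarrow> nat \<Rightarrow> real" where
  "link_total N f l = (\<Sum>i=1..N. f i l)"

definition user_cost :: "(real \<Rightarrow> real) \<Rightarrow> (nat \<Rightarrow> real) \<Rightarrow> nat \<Rightarrow> nat \<Rightarrow> (nat \<Rightarrow> nat \<Rightarrow> real) \<Rightarrow> nat \<Rightarrow> ereal" where
  "user_cost T c N L f i = (\<Sum>l=1..L. ereal (f i l) * link_cost T c l (link_total N f l))"

definition is_nash :: "(real \<Rightarrow> real) \<Rightarrow> (nat \<Rightarrow> real) \<Rightarrow> nat \<Rightarrow> nat \<Rightarrow> (nat \<Rightarrow> real) \<Rightarrow> (nat \<Rightarrow> nat \<Rightarrow> real) \<Rightarrow> bool" where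
  "is_nash T c N L r f \<longleftrightarrow> feasible N L r f \<and>
     (\<forall>i\<in>{1..N}. \<forall>g. is_strategy L r i g \<longrightarrow> user_cost T c N L f i \<le> user_cost T c N L (f(i := g)) i)"

definition social_cost :: "(real \<Rightarrow> real) \<Rightarrow> (nat \<Rightarrow> real) \<Rightarrow> nat \<Rightarrow> nat \<Rightarrow> (nat \<Rightarrow> nat \<Rightarrow> real) \<Rightarrow> ereal" where
  "social_cost T c N L f = (\<Sum>l=1..L. ereal (link_total N f l) * link_cost T c l (link_total N f l))"

definition is_social_opt :: "(real \<Rightarrow> real) \<Rightarrow> (nat \<Rightarrow> real) \<Rightarrow> nat \<Rightarrow> nat \<Rightarrow> (nat \<Rightarrow> real) \<Rightarrow> (nat \<Rightarrow> nat \<Rightarrow> real) \<Rightarrow> bool" where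
  "is_social_opt T c N L r f \<longleftrightarrow> feasible N L r f \<and>
     (\<forall>g. feasible N L r g \<longrightarrow> social_cost T c N L f \<le> social_cost T c N L g)"

end

theory Submission
  imports Defs
begin

(*
  At a social optimum and at a Nash equilibrium each link carries strictly less than its
  capacity, so both satisfy first-order conditions: moving flow from a used link to any
  other link cannot lower the social cost, resp. the cost of the user who moves it.
  Homogeneity makes every link cost a translate of one convex increasing cost, with wider
  links translated less. If the equilibrium loaded a wider link l less and a narrower link
  n more than the optimum, the first-order conditions of the optimum between l and n
  would contradict the sum of the equilibrium conditions of the users on n. Hence the
  links on which the equilibrium exceeds the optimum come before those on which it falls
  short, and M is the last link of the first kind; link costs are monotone in the load.
*)

lemma has_real_derivative_nonneg_at_right_min:
  fixes \<psi> :: "real \<Rightarrow> real"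
  assumes deriv: "(\<psi> has_real_derivative D) (at x within {x..<b})" and "x < b"
    and min: "\<And>y. y \<in> {x<..<b} \<Longrightarrow> \<psi> x \<le> \<psi> y"
  shows "0 \<le> D"
proof -
  define m where "m = (x + b) / 2"
  have "x < m" "m < b" using \<open>x < b\<close> by (auto simp: m_def)
  have "(\<psi> has_real_derivative D) (at x within {x..m})"
    by (rule has_field_derivative_subset[OF deriv]) (use \<open>m < b\<close> in auto)
  then have "((\<lambda>y. (\<psi> y - \<psi> x) / (y - x)) \<longlongrightarrow> D) (at_right x)"
    using has_field_derivative_iff at_within_Icc_at_right[OF \<open>x < m\<close>] by metis
  moreover have "\<forall>\<^sub>F y in at_right x. 0 \<le> (\<psi> y - \<psi> x) / (y - x)"
    using eventually_at_right_real[OF \<open>x < b\<close>] by eventually_elim (use min in auto)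
  ultimately show ?thesis
    by (intro tendsto_lowerbound) auto
qed

lemma has_real_derivative_comp_affine_within:
  fixes G :: "real \<Rightarrow> real"
  assumes "(G has_real_derivative D) (at p within S)" and "(\<lambda>e. p + s * e) ` A \<subseteq> S"
  shows "((\<lambda>e. G (p + s * e)) has_real_derivative D * s) (at 0 within A)"
proof -
  have "(G has_real_derivative D) (at ((\<lambda>e. p + s * e) 0) within (\<lambda>e. p + s * e) ` A)"
    using has_field_derivative_subset[OF assms] by simp
  moreover have "((\<lambda>e. p + s * e) has_real_derivative s) (at 0 within A)"
    by (auto intro!: derivative_eq_intros)
  ultimately show ?thesis
    using DERIV_image_chain by (fastforce simp: o_def)
qed

text \<open>Unlike \<open>convex_on_imp_above_tangent\<close>, the point of tangency may lie on the boundary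
  of the domain, where only a one-sided derivative exists.\<close>

lemma convex_on_above_tangent_within:
  fixes G :: "real \<Rightarrow> real"
  assumes "convex S" and conv: "convex_on S G"
    and deriv: "(G has_real_derivative D) (at x within S)" and "x \<in> S" "y \<in> S"
  shows "G x + D * (y - x) \<le> G y"
proof -
  have segment: "x + (y - x) * t = (1 - t) *\<^sub>R x + t *\<^sub>R y" for t
    by (simp add: algebra_simps)
  have "(\<lambda>t. x + (y - x) * t) ` {0..<1} \<subseteq> S"
    using convexD[OF \<open>convex S\<close> \<open>x \<in> S\<close> \<open>y \<in> S\<close>] by (auto simp: segment)
  from has_real_derivative_comp_affine_within[OF deriv this]
  have "((\<lambda>t. (1 - t) * G x + t * G y - G (x + (y - x) * t)) has_real_derivative
          G y - G x - D * (y - x)) (at 0 within {0..<1})"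
    by (auto intro!: derivative_eq_intros simp: algebra_simps)
  moreover have "G (x + (y - x) * t) \<le> (1 - t) * G x + t * G y" if "t \<in> {0<..<1}" for t
    using convex_onD[OF conv, of t x y] that \<open>x \<in> S\<close> \<open>y \<in> S\<close> by (auto simp: segment)
  ultimately have "0 \<le> G y - G x - D * (y - x)"
    by (intro has_real_derivative_nonneg_at_right_min[of _ _ 0 1]) auto
  then show ?thesis by simp
qed

lemma convex_on_has_real_derivative_mono:
  fixes G :: "real \<Rightarrow> real"
  assumes "convex S" "convex_on S G"
    and deriv: "\<And>z. z \<in> S \<Longrightarrow> (G has_real_derivative D z) (at z within S)"
    and "x \<in> S" "y \<in> S" "x \<le> y"
  shows "D x \<le> D y"
proof (cases "x = y")
  case False
  have "(D x - D y) * (y - x) \<le> 0"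
    using convex_on_above_tangent_within[OF assms(1,2) deriv[OF \<open>x \<in> S\<close>] \<open>x \<in> S\<close> \<open>y \<in> S\<close>]
      convex_on_above_tangent_within[OF assms(1,2) deriv[OF \<open>y \<in> S\<close>] \<open>y \<in> S\<close> \<open>x \<in> S\<close>]
    by (simp add: algebra_simps)
  with False \<open>x \<le> y\<close> show ?thesis by (simp add: mult_le_0_iff)
qed simp

lemma mono_on_has_real_derivative_nonneg:
  fixes G :: "real \<Rightarrow> real"
  assumes "mono_on {a..<b} G" and "(G has_real_derivative D) (at x within {a..<b})" and "x \<in> {a..<b}"
  shows "0 \<le> D"
proof (rule has_real_derivative_nonneg_at_right_min)
  show "(G has_real_derivative D) (at x within {x..<b})"
    by (rule has_field_derivative_subset[OF assms(2)]) (use assms(3) in auto)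
  show "x < b" using assms(3) by auto
  show "G x \<le> G y" if "y \<in> {x<..<b}" for y
    using that assms(3) by (intro mono_onD[OF assms(1)]) auto
qed

lemma exchange_first_order_condition:
  fixes G D :: "real \<Rightarrow> real"
  assumes deriv: "\<And>x. x \<in> S \<Longrightarrow> (G has_real_derivative D x) (at x within S)"
    and "p \<in> S" "q \<in> S" "0 < \<delta>"
    and range: "\<And>e. e \<in> {0..<\<delta>} \<Longrightarrow> p - e \<in> S \<and> q + e \<in> S"
    and min: "\<And>e. e \<in> {0<..<\<delta>} \<Longrightarrow>
                 \<alpha> * G p + \<beta> * G q \<le> (\<alpha> - e) * G (p - e) + (\<beta> + e) * G (q + e)"
  shows "G p + \<alpha> * D p \<le> G q + \<beta> * D q"
proof -
  have "(\<lambda>e. p + (-1) * e) ` {0..<\<delta>} \<subseteq> S" "(\<lambda>e. q + 1 * e) ` {0..<\<delta>} \<subseteq> S"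
    unfolding image_subset_iff using range by simp_all
  from has_real_derivative_comp_affine_within[OF deriv[OF \<open>p \<in> S\<close>] this(1)]
    has_real_derivative_comp_affine_within[OF deriv[OF \<open>q \<in> S\<close>] this(2)]
  have "((\<lambda>e. (\<alpha> - e) * G (p - e) + (\<beta> + e) * G (q + e)) has_real_derivative
          G q + \<beta> * D q - (G p + \<alpha> * D p)) (at 0 within {0..<\<delta>})"
    by (auto intro!: derivative_eq_intros simp: algebra_simps)
  then have "0 \<le> G q + \<beta> * D q - (G p + \<alpha> * D p)"
    by (rule has_real_derivative_nonneg_at_right_min) (use \<open>0 < \<delta>\<close> min in auto)
  then show ?thesis by simp
qed

lemma sum_eq_off_two_points:
  fixes u v :: "'a \<Rightarrow> 'b::ab_group_add"
  assumes "finite A" "l \<in> A" "n \<in> A" "l \<noteq> n" "\<And>m. m \<in> A - {l, n} \<Longrightarrow> u m = v m"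
  shows "sum u A - sum v A = u l + u n - v l - v n"
proof -
  have "sum w A = w l + w n + sum w (A - {l} - {n})" for w :: "'a \<Rightarrow> 'b"
    using assms(1-4) by (simp add: sum.remove[of A l] sum.remove[of "A - {l}" n])
  moreover have "sum u (A - {l} - {n}) = sum v (A - {l} - {n})"
    using assms(5) by (intro sum.cong) auto
  ultimately show ?thesis by simp
qed

lemma link_total_nonneg: "feasible N L r f \<Longrightarrow> m \<in> {1..L} \<Longrightarrow> 0 \<le> link_total N f m"
  unfolding feasible_def is_strategy_def link_total_def by (auto intro: sum_nonneg)

lemma sum_link_total: "feasible N L r f \<Longrightarrow> (\<Sum>m=1..L. link_total N f m) = (\<Sum>i=1..N. r i)"
  unfolding feasible_def is_strategy_def link_total_def
  by (subst sum.swap) (auto intro: sum.cong)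

lemma flow_le_link_total:
  "feasible N L r f \<Longrightarrow> i \<in> {1..N} \<Longrightarrow> m \<in> {1..L} \<Longrightarrow> f i m \<le> link_total N f m"
  unfolding feasible_def is_strategy_def link_total_def by (intro member_le_sum) auto

lemma link_total_pos_imp_user:
  assumes "feasible N L r f" "m \<in> {1..L}" "0 < link_total N f m"
  obtains i where "i \<in> {1..N}" "0 < f i m"
proof -
  have "\<not> (\<forall>i\<in>{1..N}. f i m \<le> 0)"
    using assms(3) unfolding link_total_def by (metis linorder_not_le sum_nonpos)
  then show ?thesis using that by auto
qed

lemma link_total_fun_upd:
  assumes "i \<in> {1..N}"
  shows "link_total N (f(i := g)) m = link_total N f m - f i m + g m"
proof -
  have "link_total N (f(i := g)) m = g m + (\<Sum>j\<in>{1..N}-{i}. f j m)"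
    unfolding link_total_def using assms by (simp add: sum.remove[of _ i])
  also have "\<dots> = link_total N f m - f i m + g m"
    unfolding link_total_def using assms by (simp add: sum.remove[of _ i])
  finally show ?thesis .
qed

lemma feasible_fun_upd: "feasible N L r f \<Longrightarrow> is_strategy L r i g \<Longrightarrow> feasible N L r (f(i := g))"
  unfolding feasible_def by auto

definition move_flow :: "nat \<Rightarrow> nat \<Rightarrow> real \<Rightarrow> (nat \<Rightarrow> real) \<Rightarrow> nat \<Rightarrow> real" where
  "move_flow l n e g = g(l := g l - e, n := g n + e)"

lemma move_flow_apply:
  "l \<noteq> n \<Longrightarrow> move_flow l n e g m = g m - (if m = l then e else 0) + (if m = n then e else 0)"
  by (simp add: move_flow_def)

lemma is_strategy_move_flow:
  assumes "is_strategy L r i g" "l \<in> {1..L}" "n \<in> {1..L}" "l \<noteq> n" "0 \<le> e" "e \<le> g l"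
  shows "is_strategy L r i (move_flow l n e g)"
proof -
  have "sum (move_flow l n e g) {1..L} - sum g {1..L} = 0"
    using assms(2-4) by (subst sum_eq_off_two_points) (auto simp: move_flow_def)
  then show ?thesis
    using assms by (auto simp: is_strategy_def move_flow_def)
qed

lemma link_total_move_flow:
  assumes "i \<in> {1..N}" "l \<noteq> n"
  shows "link_total N (f(i := move_flow l n e (f i))) m =
           link_total N f m - (if m = l then e else 0) + (if m = n then e else 0)"
  using assms by (auto simp: link_total_fun_upd move_flow_def)

lemma move_flow_below_capacity:
  assumes "\<forall>m\<in>{1..L}. link_total N f m < c m" "i \<in> {1..N}" "l \<noteq> n" "0 \<le> e"
    and "e < c n - link_total N f n"
  shows "\<forall>m\<in>{1..L}. link_total N (f(i := move_flow l n e (f i))) m < c m"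
proof
  fix m assume "m \<in> {1..L}"
  then show "link_total N (f(i := move_flow l n e (f i))) m < c m"
    using bspec[OF assms(1) \<open>m \<in> {1..L}\<close>] assms(2-5) by (auto simp: link_total_move_flow)
qed

lemma social_cost_below_capacity:
  assumes "\<forall>m\<in>{1..L}. link_total N f m < c m"
  shows "social_cost T c N L f = ereal (\<Sum>m=1..L. link_total N f m * T (c m - link_total N f m))"
  using assms by (simp add: social_cost_def link_cost_def)

lemma user_cost_below_capacity:
  assumes "\<forall>m\<in>{1..L}. link_total N f m < c m"
  shows "user_cost T c N L f i = ereal (\<Sum>m=1..L. f i m * T (c m - link_total N f m))"
  using assms by (simp add: user_cost_def link_cost_def)

lemma user_cost_at_capacity:
  assumes "m \<in> {1..L}" "0 < f i m" "c m \<le> link_total N f m"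
  shows "user_cost T c N L f i = \<infinity>"
proof -
  have "ereal (f i m) * link_cost T c m (link_total N f m) = \<infinity>"
    using assms by (simp add: link_cost_def)
  then show ?thesis unfolding user_cost_def using assms(1) by (subst sum_Pinfty) auto
qed

lemma social_cost_at_capacity:
  assumes "m \<in> {1..L}" "0 < c m" "c m \<le> link_total N f m"
  shows "social_cost T c N L f = \<infinity>"
proof -
  have "ereal (link_total N f m) * link_cost T c m (link_total N f m) = \<infinity>"
    using assms by (simp add: link_cost_def)
  then show ?thesis unfolding social_cost_def using assms(1) by (subst sum_Pinfty) auto
qed

lemma exists_threshold_index:
  fixes u v :: "nat \<Rightarrow> real"
  assumes "1 \<le> L" and sums: "(\<Sum>l=1..L. u l) = (\<Sum>l=1..L. v l)"
    and no_crossing: "\<And>l n. l \<in> {1..L} \<Longrightarrow> n \<in> {1..L} \<Longrightarrow> l < n \<Longrightarrow> v l < u l \<Longrightarrow> u n < v n \<Longrightarrow> False"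
  obtains M where "M \<in> {1..L}" "\<forall>l\<in>{1..L}. l \<le> M \<longrightarrow> u l \<le> v l" "\<forall>n\<in>{1..L}. M < n \<longrightarrow> v n \<le> u n"
proof (cases "\<exists>l\<in>{1..L}. u l < v l")
  case True
  define A where "A = {l\<in>{1..L}. u l < v l}"
  define M where "M = Max A"
  have "finite A" "A \<noteq> {}" using True by (auto simp: A_def)
  then have "M \<in> A" unfolding M_def by (rule Max_in)
  have above: "l \<le> M" if "l \<in> {1..L}" "u l < v l" for l
    unfolding M_def using \<open>finite A\<close> that by (simp add: A_def)
  from \<open>M \<in> A\<close> have "M \<in> {1..L}" "u M < v M" by (auto simp: A_def)
  moreover have "u l \<le> v l" if "l \<in> {1..L}" "l \<le> M" for l
    using no_crossing[OF that(1) \<open>M \<in> {1..L}\<close>] \<open>u M < v M\<close> that by (cases "l = M") force+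
  moreover have "v n \<le> u n" if "n \<in> {1..L}" "M < n" for n
    using above[OF that(1)] that(2) by force
  ultimately show ?thesis using that by blast
next
  case False
  then have "\<forall>l\<in>{1..L}. v l \<le> u l" by auto
  moreover have "(\<Sum>l=1..L. u l - v l) = 0" using sums by (simp add: sum_subtractf)
  ultimately have "\<forall>l\<in>{1..L}. u l = v l"
    using sum_nonneg_eq_0_iff[of "{1..L}" "\<lambda>l. u l - v l"] by auto
  then show ?thesis using that[of 1] \<open>1 \<le> L\<close> by auto
qed

locale routing_game =
  fixes N L :: nat and c r :: "nat \<Rightarrow> real" and T :: "real \<Rightarrow> real"
  assumes capacity_pos: "\<forall>l\<in>{1..L}. 0 < c l"
    and demand_pos: "\<forall>i\<in>{1..N}. 0 < r i"
    and demand_lt_capacity: "(\<Sum>i=1..N. r i) < (\<Sum>l=1..L. c l)"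
begin

lemma exists_feasible_below_capacity:
  obtains p where "feasible N L r p" "\<forall>l\<in>{1..L}. link_total N p l < c l"
proof
  define C where "C = (\<Sum>l=1..L. c l)"
  define R where "R = (\<Sum>i=1..N. r i)"
  have "0 \<le> R" unfolding R_def using demand_pos by (intro sum_nonneg) (auto simp: less_imp_le)
  have "R < C" using demand_lt_capacity by (simp add: R_def C_def)
  define p where "p i l = r i * c l / C" for i l
  have "0 < C" using \<open>0 \<le> R\<close> \<open>R < C\<close> by linarith
  show "feasible N L r p"
    unfolding feasible_def is_strategy_def
  proof safe
    fix i l assume "i \<in> {1..N}" "l \<in> {1..L}"
    then show "0 \<le> p i l"
      using capacity_pos demand_pos \<open>0 < C\<close> by (simp add: p_def less_imp_le)
  next
    fix i
    have "(\<Sum>l=1..L. p i l) = r i * C / C"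
      by (simp add: p_def C_def sum_distrib_left sum_divide_distrib)
    then show "(\<Sum>l=1..L. p i l) = r i" using \<open>0 < C\<close> by simp
  qed
  show "\<forall>l\<in>{1..L}. link_total N p l < c l"
  proof
    fix l assume "l \<in> {1..L}"
    have "link_total N p l = R * c l / C"
      unfolding link_total_def p_def R_def by (simp add: sum_distrib_right sum_divide_distrib)
    also have "\<dots> < c l"
      using \<open>0 \<le> R\<close> \<open>R < C\<close> capacity_pos \<open>l \<in> {1..L}\<close> by (simp add: divide_less_eq)
    finally show "link_total N p l < c l" .
  qed
qed

lemma social_opt_below_capacity:
  assumes "is_social_opt T c N L r fs" "m \<in> {1..L}"
  shows "link_total N fs m < c m"
proof (rule ccontr)
  assume "\<not> link_total N fs m < c m"
  then have "social_cost T c N L fs = \<infinity>"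
    using social_cost_at_capacity assms(2) capacity_pos by force
  moreover obtain p where "feasible N L r p" "\<forall>l\<in>{1..L}. link_total N p l < c l"
    using exists_feasible_below_capacity .
  then have "social_cost T c N L fs \<le> ereal (\<Sum>m=1..L. link_total N p m * T (c m - link_total N p m))"
    using assms(1) social_cost_below_capacity unfolding is_social_opt_def by metis
  ultimately show False by simp
qed

lemma exists_finite_cost_response:
  assumes "feasible N L r f" "i \<in> {1..N}"
  obtains g where "is_strategy L r i g" "user_cost T c N L (f(i := g)) i \<noteq> \<infinity>"
proof
  define others where "others m = link_total N f m - f i m" for m
  define w where "w m = max 0 (c m - others m)" for m
  define W where "W = (\<Sum>m=1..L. w m)"
  have "(\<Sum>m=1..L. others m) = (\<Sum>j=1..N. r j) - r i"
    using sum_link_total[OF assms(1)] assms unfolding others_def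
    by (simp add: sum_subtractf feasible_def is_strategy_def)
  moreover have "(\<Sum>m=1..L. c m - others m) \<le> W" unfolding W_def w_def by (intro sum_mono) auto
  ultimately have "r i < W" using demand_lt_capacity by (simp add: sum_subtractf)
  have "0 < r i" using demand_pos assms(2) by auto
  define g where "g m = r i * w m / W" for m
  show "is_strategy L r i g"
    unfolding is_strategy_def g_def W_def using \<open>0 < r i\<close> \<open>r i < W\<close>
    by (auto simp: w_def sum_distrib_left[symmetric] sum_divide_distrib[symmetric] W_def)
  have "ereal (g m) * link_cost T c m (link_total N (f(i := g)) m) \<noteq> \<infinity>" for m
  proof (cases "g m = 0")
    case False
    then have "0 < w m" using \<open>0 < r i\<close> \<open>r i < W\<close> by (auto simp: g_def w_def)
    then have "g m < w m"
      unfolding g_def using \<open>0 < r i\<close> \<open>r i < W\<close> by (simp add: divide_less_eq mult_strict_right_mono)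
    then have "link_total N (f(i := g)) m < c m"
      using \<open>0 < w m\<close> link_total_fun_upd[OF assms(2)] by (auto simp: w_def others_def)
    then show ?thesis by (simp add: link_cost_def)
  qed (simp add: zero_ereal_def[symmetric])
  then show "user_cost T c N L (f(i := g)) i \<noteq> \<infinity>"
    unfolding user_cost_def by (subst sum_Pinfty) auto
qed

lemma nash_below_capacity:
  assumes "is_nash T c N L r fh" "m \<in> {1..L}"
  shows "link_total N fh m < c m"
proof (rule ccontr)
  assume at_cap: "\<not> link_total N fh m < c m"
  have "feasible N L r fh" using assms(1) by (simp add: is_nash_def)
  moreover have "0 < link_total N fh m" using at_cap capacity_pos assms(2) by force
  ultimately obtain i where "i \<in> {1..N}" "0 < fh i m"
    using link_total_pos_imp_user assms(2) by blast
  then have "user_cost T c N L fh i = \<infinity>"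
    using user_cost_at_capacity at_cap assms(2) by force
  moreover obtain g where "is_strategy L r i g" "user_cost T c N L (fh(i := g)) i \<noteq> \<infinity>"
    using exists_finite_cost_response \<open>feasible N L r fh\<close> \<open>i \<in> {1..N}\<close> .
  ultimately show False using assms(1) \<open>i \<in> {1..N}\<close> unfolding is_nash_def by force
qed

end

locale homogeneous_routing_game = routing_game +
  fixes D :: "real \<Rightarrow> real"
  assumes links_nonempty: "1 \<le> L"
    and capacity_antimono: "\<forall>l\<in>{1..L}. \<forall>m\<in>{1..L}. l \<le> m \<longrightarrow> c m \<le> c l"
    and cost_deriv: "\<forall>x\<in>{0..<c 1}. ((\<lambda>x. T (c 1 - x)) has_real_derivative D x) (at x within {0..<c 1})"
    and cost_convex: "convex_on {0..<c 1} (\<lambda>x. T (c 1 - x))"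
    and cost_strict_mono: "strict_mono_on {0..<c 1} (\<lambda>x. T (c 1 - x))"
begin

text \<open>Link 1 is the widest, so every link cost is a translate of the cost of link 1 by a
  nonnegative shift.\<close>

definition base_cost :: "real \<Rightarrow> real" where
  "base_cost x = T (c 1 - x)"

definition capacity_gap :: "nat \<Rightarrow> real" where
  "capacity_gap m = c 1 - c m"

text \<open>The rate at which the cost \<open>y * T (c m - t)\<close> of a user carrying \<open>y\<close> out of the total
  \<open>t\<close> on link \<open>m\<close> grows when that user adds flow to the link.\<close>

definition marginal_cost :: "nat \<Rightarrow> real \<Rightarrow> real \<Rightarrow> real" where
  "marginal_cost m t y = base_cost (t + capacity_gap m) + y * D (t + capacity_gap m)"

lemma link_cost_eq_base_cost: "T (c m - x) = base_cost (x + capacity_gap m)"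
  by (simp add: base_cost_def capacity_gap_def)

lemma shifted_flow_in_domain:
  assumes "m \<in> {1..L}" "0 \<le> x" "x < c m"
  shows "x + capacity_gap m \<in> {0..<c 1}"
  using assms links_nonempty capacity_antimono by (auto simp: capacity_gap_def)

lemma base_cost_deriv: "x \<in> {0..<c 1} \<Longrightarrow> (base_cost has_real_derivative D x) (at x within {0..<c 1})"
  using cost_deriv unfolding base_cost_def[abs_def] by blast

lemma base_cost_convex: "convex_on {0..<c 1} base_cost"
  using cost_convex unfolding base_cost_def[abs_def] .

lemma base_cost_strict_mono: "strict_mono_on {0..<c 1} base_cost"
  using cost_strict_mono unfolding base_cost_def[abs_def] .

lemma cost_deriv_nonneg: "x \<in> {0..<c 1} \<Longrightarrow> 0 \<le> D x"
  using mono_on_has_real_derivative_nonneg[OF strict_mono_on_imp_mono_on[OF base_cost_strict_mono]]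
    base_cost_deriv by blast

lemma cost_deriv_mono: "x \<in> {0..<c 1} \<Longrightarrow> y \<in> {0..<c 1} \<Longrightarrow> x \<le> y \<Longrightarrow> D x \<le> D y"
  using convex_on_has_real_derivative_mono[OF _ base_cost_convex base_cost_deriv] by simp

lemma link_cost_mono:
  assumes "m \<in> {1..L}" "0 \<le> x" "x \<le> y" "y < c m"
  shows "link_cost T c m x \<le> link_cost T c m y"
proof -
  have "base_cost (x + capacity_gap m) \<le> base_cost (y + capacity_gap m)"
    using assms shifted_flow_in_domain[of m x] shifted_flow_in_domain[of m y]
    by (intro strict_mono_on_leD[OF base_cost_strict_mono]) auto
  then show ?thesis using assms by (simp add: link_cost_def link_cost_eq_base_cost)
qed

lemma social_opt_marginal_cost_le:
  assumes opt: "is_social_opt T c N L r fs" and l: "l \<in> {1..L}" and n: "n \<in> {1..L}" "l \<noteq> n"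
    and "0 < link_total N fs l"
  shows "marginal_cost l (link_total N fs l) (link_total N fs l)
           \<le> marginal_cost n (link_total N fs n) (link_total N fs n)"
proof -
  define t where "t = link_total N fs"
  have fs: "feasible N L r fs" using opt by (simp add: is_social_opt_def)
  have below: "\<forall>m\<in>{1..L}. t m < c m" using social_opt_below_capacity[OF opt] by (simp add: t_def)
  obtain j where j: "j \<in> {1..N}" "0 < fs j l"
    using link_total_pos_imp_user[OF fs l] \<open>0 < link_total N fs l\<close> by blast
  have "fs j l \<le> t l" using flow_le_link_total[OF fs j(1) l] by (simp add: t_def)
  define \<delta> where "\<delta> = min (fs j l) (c n - t n)"
  have "0 < \<delta>" using j below n by (auto simp: \<delta>_def)
  have "base_cost (t l + capacity_gap l) + t l * D (t l + capacity_gap l)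
        \<le> base_cost (t n + capacity_gap n) + t n * D (t n + capacity_gap n)"
  proof (rule exchange_first_order_condition[OF base_cost_deriv _ _ \<open>0 < \<delta>\<close>])
    have t_nonneg: "\<forall>m\<in>{1..L}. 0 \<le> t m" using link_total_nonneg[OF fs] by (simp add: t_def)
    show "t l + capacity_gap l \<in> {0..<c 1}" "t n + capacity_gap n \<in> {0..<c 1}"
      using shifted_flow_in_domain l n below t_nonneg by auto
    show "t l + capacity_gap l - e \<in> {0..<c 1} \<and> t n + capacity_gap n + e \<in> {0..<c 1}"
      if "e \<in> {0..<\<delta>}" for e
      using shifted_flow_in_domain[OF l, of "t l - e"] shifted_flow_in_domain[OF n(1), of "t n + e"]
        that bspec[OF below l] bspec[OF below n(1)] bspec[OF t_nonneg l] bspec[OF t_nonneg n(1)]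
        \<open>fs j l \<le> t l\<close>
      by (auto simp: \<delta>_def algebra_simps)
    show "t l * base_cost (t l + capacity_gap l) + t n * base_cost (t n + capacity_gap n)
          \<le> (t l - e) * base_cost (t l + capacity_gap l - e)
             + (t n + e) * base_cost (t n + capacity_gap n + e)"
      if e: "e \<in> {0<..<\<delta>}" for e
    proof -
      define f' where "f' = fs(j := move_flow l n e (fs j))"
      define t' where "t' = link_total N f'"
      have "feasible N L r f'"
        unfolding f'_def using fs j e l n
        by (intro feasible_fun_upd is_strategy_move_flow) (auto simp: feasible_def \<delta>_def)
      moreover have below': "\<forall>m\<in>{1..L}. t' m < c m"
        unfolding t'_def f'_def using below j n e
        by (intro move_flow_below_capacity) (auto simp: t_def \<delta>_def)
      ultimately have "social_cost T c N L fs \<le> social_cost T c N L f'"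
        using opt by (simp add: is_social_opt_def)
      then have "(\<Sum>m=1..L. t m * T (c m - t m)) \<le> (\<Sum>m=1..L. t' m * T (c m - t' m))"
        using social_cost_below_capacity below below' by (simp add: t_def t'_def)
      moreover have "(\<Sum>m=1..L. t' m * T (c m - t' m)) - (\<Sum>m=1..L. t m * T (c m - t m))
          = t' l * T (c l - t' l) + t' n * T (c n - t' n) - t l * T (c l - t l) - t n * T (c n - t n)"
        unfolding t'_def f'_def t_def using j n l
        by (intro sum_eq_off_two_points) (auto simp: link_total_move_flow)
      moreover have "t' l = t l - e" "t' n = t n + e"
        unfolding t'_def f'_def t_def using j n by (auto simp: link_total_move_flow)
      ultimately show ?thesis
        unfolding link_cost_eq_base_cost by (simp add: algebra_simps)
    qed
  qed
  then show ?thesis by (simp add: marginal_cost_def t_def)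
qed

lemma nash_marginal_cost_le:
  assumes ne: "is_nash T c N L r fh" and l: "l \<in> {1..L}" and n: "n \<in> {1..L}" "l \<noteq> n"
    and i: "i \<in> {1..N}" and "0 < fh i n"
  shows "marginal_cost n (link_total N fh n) (fh i n) \<le> marginal_cost l (link_total N fh l) (fh i l)"
proof -
  define t where "t = link_total N fh"
  have fh: "feasible N L r fh" using ne by (simp add: is_nash_def)
  have below: "\<forall>m\<in>{1..L}. t m < c m" using nash_below_capacity[OF ne] by (simp add: t_def)
  have "fh i n \<le> t n" using flow_le_link_total[OF fh i n(1)] by (simp add: t_def)
  define \<delta> where "\<delta> = min (fh i n) (c l - t l)"
  have "0 < \<delta>" using \<open>0 < fh i n\<close> below l by (auto simp: \<delta>_def)
  have "base_cost (t n + capacity_gap n) + fh i n * D (t n + capacity_gap n)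
        \<le> base_cost (t l + capacity_gap l) + fh i l * D (t l + capacity_gap l)"
  proof (rule exchange_first_order_condition[OF base_cost_deriv _ _ \<open>0 < \<delta>\<close>])
    have t_nonneg: "\<forall>m\<in>{1..L}. 0 \<le> t m" using link_total_nonneg[OF fh] by (simp add: t_def)
    show "t l + capacity_gap l \<in> {0..<c 1}" "t n + capacity_gap n \<in> {0..<c 1}"
      using shifted_flow_in_domain l n below t_nonneg by auto
    show "t n + capacity_gap n - e \<in> {0..<c 1} \<and> t l + capacity_gap l + e \<in> {0..<c 1}"
      if "e \<in> {0..<\<delta>}" for e
      using shifted_flow_in_domain[OF n(1), of "t n - e"] shifted_flow_in_domain[OF l, of "t l + e"]
        that bspec[OF below l] bspec[OF below n(1)] bspec[OF t_nonneg l] bspec[OF t_nonneg n(1)]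
        \<open>fh i n \<le> t n\<close>
      by (auto simp: \<delta>_def algebra_simps)
    show "fh i n * base_cost (t n + capacity_gap n) + fh i l * base_cost (t l + capacity_gap l)
          \<le> (fh i n - e) * base_cost (t n + capacity_gap n - e)
             + (fh i l + e) * base_cost (t l + capacity_gap l + e)"
      if e: "e \<in> {0<..<\<delta>}" for e
    proof -
      define g where "g = move_flow n l e (fh i)"
      define t' where "t' = link_total N (fh(i := g))"
      have "is_strategy L r i g"
        unfolding g_def using fh i e l n
        by (intro is_strategy_move_flow) (auto simp: feasible_def \<delta>_def)
      moreover have below': "\<forall>m\<in>{1..L}. t' m < c m"
        unfolding t'_def g_def using below i l n e
        by (intro move_flow_below_capacity) (auto simp: t_def \<delta>_def)
      ultimately have "user_cost T c N L fh i \<le> user_cost T c N L (fh(i := g)) i"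
        using ne i by (simp add: is_nash_def)
      then have "(\<Sum>m=1..L. fh i m * T (c m - t m)) \<le> (\<Sum>m=1..L. g m * T (c m - t' m))"
        using user_cost_below_capacity below below' by (simp add: t_def t'_def)
      moreover have "(\<Sum>m=1..L. g m * T (c m - t' m)) - (\<Sum>m=1..L. fh i m * T (c m - t m))
          = g n * T (c n - t' n) + g l * T (c l - t' l) - fh i n * T (c n - t n) - fh i l * T (c l - t l)"
        unfolding t'_def g_def t_def using i n l
        by (intro sum_eq_off_two_points) (auto simp: link_total_move_flow move_flow_apply)
      moreover have "t' n = t n - e" "t' l = t l + e" "g n = fh i n - e" "g l = fh i l + e"
        unfolding t'_def g_def t_def using i n by (auto simp: link_total_move_flow move_flow_apply)
      ultimately show ?thesis
        unfolding link_cost_eq_base_cost by (simp add: algebra_simps)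
    qed
  qed
  then show ?thesis by (simp add: marginal_cost_def t_def)
qed

text \<open>If the equilibrium loads a wider link \<open>l\<close> less and a narrower link \<open>n\<close> more than the
  optimum, summing the Nash conditions of the users on \<open>n\<close> yields an aggregate condition in
  the opposite direction to the optimality condition between \<open>l\<close> and \<open>n\<close>; monotonicity of
  \<open>base_cost\<close> and \<open>D\<close> makes the two incompatible.\<close>

lemma no_crossing:
  assumes ne: "is_nash T c N L r fh" and opt: "is_social_opt T c N L r fs"
    and l: "l \<in> {1..L}" and n: "n \<in> {1..L}" "l < n"
    and "link_total N fh l < link_total N fs l" "link_total N fs n < link_total N fh n"
  shows False
proof -
  have fh: "feasible N L r fh" using ne by (simp add: is_nash_def)
  have fs: "feasible N L r fs" using opt by (simp add: is_social_opt_def)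
  define a where "a = link_total N fs l"
  define a' where "a' = link_total N fh l"
  define b where "b = link_total N fs n"
  define b' where "b' = link_total N fh n"
  have "0 \<le> a'" "0 \<le> b" "a' < a" "b < b'"
    using link_total_nonneg[OF fh l] link_total_nonneg[OF fs n(1)] assms(6,7)
    by (auto simp: a_def a'_def b_def b'_def)
  have "a < c l" "b' < c n"
    using social_opt_below_capacity[OF opt l] nash_below_capacity[OF ne n(1)]
    by (auto simp: a_def b'_def)
  define pa where "pa = a + capacity_gap l"
  define pa' where "pa' = a' + capacity_gap l"
  define pb where "pb = b + capacity_gap n"
  define pb' where "pb' = b' + capacity_gap n"
  have dom: "pa \<in> {0..<c 1}" "pa' \<in> {0..<c 1}" "pb \<in> {0..<c 1}" "pb' \<in> {0..<c 1}"
    unfolding pa_def pa'_def pb_def pb'_def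
    using shifted_flow_in_domain l n \<open>a < c l\<close> \<open>b' < c n\<close> \<open>0 \<le> a'\<close> \<open>0 \<le> b\<close> \<open>a' < a\<close> \<open>b < b'\<close>
    by auto
  have "l \<noteq> n" "0 < a" using \<open>l < n\<close> \<open>0 \<le> a'\<close> \<open>a' < a\<close> by auto
  have opt_cond: "base_cost pa + a * D pa \<le> base_cost pb + b * D pb"
    using social_opt_marginal_cost_le[OF opt l n(1) \<open>l \<noteq> n\<close> \<open>0 < a\<close>[unfolded a_def]]
    by (simp add: marginal_cost_def pa_def pb_def a_def b_def)
  define S where "S = {i\<in>{1..N}. 0 < fh i n}"
  have "S \<subseteq> {1..N}" by (auto simp: S_def)
  obtain i where "i \<in> {1..N}" "0 < fh i n"
    using link_total_pos_imp_user[OF fh n(1)] \<open>0 \<le> b\<close> \<open>b < b'\<close> by (auto simp: b'_def)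
  then have "S \<noteq> {}" by (auto simp: S_def)
  then have "1 \<le> real (card S)" by (simp add: S_def Suc_le_eq card_gt_0_iff)
  have "(\<Sum>i\<in>S. fh i n) = b'"
    unfolding b'_def link_total_def
  proof (rule sum.mono_neutral_left)
    show "\<forall>i\<in>{1..N} - S. fh i n = 0"
      using fh n by (auto simp: S_def feasible_def is_strategy_def intro: order.antisym)
  qed (use \<open>S \<subseteq> {1..N}\<close> in auto)
  have "(\<Sum>i\<in>S. fh i l) \<le> a'"
    unfolding a'_def link_total_def
    by (rule sum_mono2) (use \<open>S \<subseteq> {1..N}\<close> fh l in \<open>auto simp: feasible_def is_strategy_def\<close>)
  have "(\<Sum>i\<in>S. base_cost pb' + fh i n * D pb') \<le> (\<Sum>i\<in>S. base_cost pa' + fh i l * D pa')"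
  proof (rule sum_mono)
    fix i assume "i \<in> S"
    then show "base_cost pb' + fh i n * D pb' \<le> base_cost pa' + fh i l * D pa'"
      using nash_marginal_cost_le[OF ne l n(1) \<open>l \<noteq> n\<close>]
      by (simp add: S_def marginal_cost_def pa'_def pb'_def a'_def b'_def)
  qed
  then have nash_cond: "card S * base_cost pb' + b' * D pb' \<le> card S * base_cost pa' + a' * D pa'"
    using mult_right_mono[OF \<open>(\<Sum>i\<in>S. fh i l) \<le> a'\<close> cost_deriv_nonneg[OF dom(2)]]
    by (simp add: sum.distrib sum_distrib_right[symmetric] \<open>(\<Sum>i\<in>S. fh i n) = b'\<close>)
  have "base_cost pa' < base_cost pa" "base_cost pb < base_cost pb'"
    using strict_mono_onD[OF base_cost_strict_mono] dom \<open>a' < a\<close> \<open>b < b'\<close>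
    by (auto simp: pa_def pa'_def pb_def pb'_def)
  show False
  proof (cases "pa \<le> pb")
    case True
    have "base_cost pa \<le> base_cost pb"
      using strict_mono_on_leD[OF base_cost_strict_mono dom(1,3) True] .
    have "a' * D pa' \<le> a * D pa"
      using cost_deriv_mono[OF dom(2,1)] cost_deriv_nonneg[OF dom(2)] \<open>0 \<le> a'\<close> \<open>a' < a\<close>
      by (intro mult_mono) (auto simp: pa_def pa'_def)
    moreover have "b * D pb \<le> b' * D pb'"
      using cost_deriv_mono[OF dom(3,4)] cost_deriv_nonneg[OF dom(3)] \<open>0 \<le> b\<close> \<open>b < b'\<close>
      by (intro mult_mono) (auto simp: pb_def pb'_def)
    moreover have "base_cost pb' - base_cost pa' \<le> card S * base_cost pb' - card S * base_cost pa'"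
      using mult_right_mono[OF \<open>1 \<le> real (card S)\<close>, of "base_cost pb' - base_cost pa'"]
        \<open>base_cost pa' < base_cost pa\<close> \<open>base_cost pb < base_cost pb'\<close> \<open>base_cost pa \<le> base_cost pb\<close>
      by (simp add: right_diff_distrib)
    ultimately show False
      using opt_cond nash_cond \<open>base_cost pa' < base_cost pa\<close> \<open>base_cost pb < base_cost pb'\<close>
        \<open>base_cost pa \<le> base_cost pb\<close> by linarith
  next
    case False
    have "c n \<le> c l" using capacity_antimono l n by auto
    then have "b \<le> a" using False by (simp add: pa_def pb_def capacity_gap_def)
    moreover have "base_cost pb < base_cost pa"
      using strict_mono_onD[OF base_cost_strict_mono dom(3,1)] False by simp
    moreover have "D pb \<le> D pa" using cost_deriv_mono[OF dom(3,1)] False by simp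
    then have "b * D pb \<le> a * D pa"
      using \<open>b \<le> a\<close> cost_deriv_nonneg[OF dom(3)] \<open>0 < a\<close> by (intro mult_mono) auto
    ultimately show False using opt_cond by linarith
  qed
qed

end

theorem lemma2p3:
  fixes N L :: nat and c r :: "nat \<Rightarrow> real" and T :: "real \<Rightarrow> real"
    and fh fs :: "nat \<Rightarrow> nat \<Rightarrow> real"
  assumes N: "N \<ge> 1" and L: "L \<ge> 1"
    and cpos: "\<forall>l\<in>{1..L}. 0 < c l"
    and cord: "\<forall>l\<in>{1..L}. \<forall>m\<in>{1..L}. l \<le> m \<longrightarrow> c m \<le> c l"
    and rpos: "\<forall>i\<in>{1..N}. 0 < r i"
    and Rcap: "(\<Sum>i=1..N. r i) < (\<Sum>l=1..L. c l)"
    and Tnonneg: "\<forall>l\<in>{1..L}. \<forall>x\<in>{0..<c l}. 0 \<le> T (c l - x)"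
    and Tincr: "\<forall>l\<in>{1..L}. strict_mono_on {0..<c l} (\<lambda>x. T (c l - x))"
    and Tconv: "\<forall>l\<in>{1..L}. convex_on {0..<c l} (\<lambda>x. T (c l - x))"
    and TC1: "\<forall>l\<in>{1..L}. \<exists>D. (\<forall>x\<in>{0..<c l}.
                 ((\<lambda>x. T (c l - x)) has_real_derivative D x) (at x within {0..<c l}))
               \<and> continuous_on {0..<c l} D"
    and NE: "is_nash T c N L r fh"
    and NE_unique: "\<forall>g. is_nash T c N L r g \<longrightarrow> (\<forall>i\<in>{1..N}. \<forall>l\<in>{1..L}. g i l = fh i l)"
    and OPT: "is_social_opt T c N L r fs"
  shows "\<exists>M\<in>{1..L}.
           (\<forall>l\<in>{1..L}. l \<le> M \<longrightarrow>
              link_cost T c l (link_total N fs l) \<le> link_cost T c l (link_total N fh l))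
         \<and> (\<forall>n\<in>{1..L}. M < n \<longrightarrow>
              link_cost T c n (link_total N fh n) \<le> link_cost T c n (link_total N fs n))"
proof -
  have "1 \<in> {1..L}" using L by simp
  then obtain D where "\<forall>x\<in>{0..<c 1}. ((\<lambda>x. T (c 1 - x)) has_real_derivative D x) (at x within {0..<c 1})"
    using TC1 by blast
  then interpret homogeneous_routing_game N L c r T D
    using L cpos cord rpos Rcap Tconv Tincr \<open>1 \<in> {1..L}\<close> by unfold_locales auto
  let ?tS = "link_total N fs" and ?tH = "link_total N fh"
  have fs: "feasible N L r fs" and fh: "feasible N L r fh"
    using OPT NE by (simp_all add: is_social_opt_def is_nash_def)
  have "(\<Sum>l=1..L. ?tS l) = (\<Sum>l=1..L. ?tH l)"
    using sum_link_total[OF fs] sum_link_total[OF fh] by simp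
  then obtain M where "M \<in> {1..L}"
    and "\<forall>l\<in>{1..L}. l \<le> M \<longrightarrow> ?tS l \<le> ?tH l" "\<forall>n\<in>{1..L}. M < n \<longrightarrow> ?tH n \<le> ?tS n"
    by (rule exists_threshold_index[OF L _ no_crossing[OF NE OPT]])
  moreover have "link_cost T c m (?tS m) \<le> link_cost T c m (?tH m)"
    if "m \<in> {1..L}" "?tS m \<le> ?tH m" for m
    using link_cost_mono[OF that(1) link_total_nonneg[OF fs that(1)] that(2)]
      nash_below_capacity[OF NE that(1)] .
  moreover have "link_cost T c m (?tH m) \<le> link_cost T c m (?tS m)"
    if "m \<in> {1..L}" "?tH m \<le> ?tS m" for m
    using link_cost_mono[OF that(1) link_total_nonneg[OF fh that(1)] that(2)]
      social_opt_below_capacity[OF OPT that(1)] .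
  ultimately show ?thesis by blast
qed

end
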